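(* Let $V$ be a finite dimensional vector space over a field $\mathbb{K}$ of characteristic zero, and let $u,v\in\widehat L(V)$ satisfy $|\exp(u)|=|\exp(v)|\in|\widehat T(V)|$. Then $|u^m|=|v^m|\in|\widehat T(V)|$ for all $m\ge0$.
   Context: $\widehat T(V)=\prod_{m\ge0}V^{\otimes m}$ is the completed tensor algebra and $\widehat L(V)\subset\widehat T(V)$ the completed free Lie algebra on $V$ (the primitive elements). $|\widehat T(V)|$ is the quotient of $\widehat T(V)$ by the closure of the span of commutators $ab-ba$, with projection $x\mapsto|x|$. *)

theory Defs
  imports Main
begin

text \<open>V has a basis indexed by the finite type 'a; the completed tensor algebra
  is the space of all formal series in non-commuting letters 'a, i.e. functions
  from words to the field.\<close>

type_synonym ('a, 'k) tseries = "'a list \<Rightarrow> 'k"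

definition ts_one :: "('a, 'k::field) tseries" where
  "ts_one = (\<lambda>w. if w = [] then 1 else 0)"

definition ts_add :: "('a, 'k::field) tseries \<Rightarrow> ('a, 'k) tseries \<Rightarrow> ('a, 'k) tseries" where
  "ts_add f g = (\<lambda>w. f w + g w)"

definition ts_diff :: "('a, 'k::field) tseries \<Rightarrow> ('a, 'k) tseries \<Rightarrow> ('a, 'k) tseries" where
  "ts_diff f g = (\<lambda>w. f w - g w)"

definition ts_smult :: "'k::field \<Rightarrow> ('a, 'k) tseries \<Rightarrow> ('a, 'k) tseries" where
  "ts_smult c f = (\<lambda>w. c * f w)"

definition ts_mul :: "('a, 'k::field) tseries \<Rightarrow> ('a, 'k) tseries \<Rightarrow> ('a, 'k) tseries" where
  "ts_mul f g = (\<lambda>w. \<Sum>i\<le>length w. f (take i w) * g (drop i w))"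

fun ts_pow :: "('a, 'k::field) tseries \<Rightarrow> nat \<Rightarrow> ('a, 'k) tseries" where
  "ts_pow f 0 = ts_one"
| "ts_pow f (Suc m) = ts_mul f (ts_pow f m)"

text \<open>Exponential of a series with zero constant term: the coefficient of a word w
  in \<open>\<Sum>m. f^m/m!\<close> only receives contributions from m \<le> length w.\<close>
definition ts_exp :: "('a, 'k::field_char_0) tseries \<Rightarrow> ('a, 'k) tseries" where
  "ts_exp f = (\<lambda>w. \<Sum>m\<le>length w. ts_pow f m w / fact m)"

inductive_set lie_poly :: "('a, 'k::field) tseries set" where
  gen: "(\<lambda>w. if w = [a] then 1 else 0) \<in> lie_poly"
| add: "f \<in> lie_poly \<Longrightarrow> g \<in> lie_poly \<Longrightarrow> ts_add f g \<in> lie_poly"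
| smult: "f \<in> lie_poly \<Longrightarrow> ts_smult c f \<in> lie_poly"
| bracket: "f \<in> lie_poly \<Longrightarrow> g \<in> lie_poly \<Longrightarrow> ts_diff (ts_mul f g) (ts_mul g f) \<in> lie_poly"

definition hom_comp :: "nat \<Rightarrow> ('a, 'k::field) tseries \<Rightarrow> ('a, 'k) tseries" where
  "hom_comp d f = (\<lambda>w. if length w = d then f w else 0)"

text \<open>Completed free Lie algebra: every homogeneous component is a Lie polynomial.\<close>
definition lie_series :: "('a, 'k::field) tseries \<Rightarrow> bool" where
  "lie_series f \<longleftrightarrow> (\<forall>d. hom_comp d f \<in> lie_poly)"

text \<open>Span of commutators ab - ba (a, b arbitrary series); scalars are absorbed into a.\<close>
inductive_set comm_span :: "('a, 'k::field) tseries set" where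
  zero: "(\<lambda>w. 0) \<in> comm_span"
| step: "x \<in> comm_span \<Longrightarrow> ts_add (ts_diff (ts_mul a b) (ts_mul b a)) x \<in> comm_span"

text \<open>|x| = |y|: x - y lies in the closure of the span of commutators, for the
  inverse-limit (degree-adic) topology on the completed tensor algebra.\<close>
definition trace_eq :: "('a, 'k::field) tseries \<Rightarrow> ('a, 'k) tseries \<Rightarrow> bool" where
  "trace_eq x y \<longleftrightarrow>
     (\<forall>N::nat. \<exists>g\<in>comm_span. \<forall>w. length w < N \<longrightarrow> ts_diff x y w = g w)"

end

theory Submission
  imports Defs
begin

text \<open>
  Let \<open>\<Delta>\<close> be the deshuffle coproduct and \<open>\<Psi> = \<mu> \<circ> \<Delta>\<close> its composite with
  concatenation, so that \<open>\<Psi> x\<close> at a word \<open>w = s t\<close> collects the coefficients of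
  \<open>x\<close> on the shuffles of \<open>s\<close> and \<open>t\<close>. Lie series are primitive, and \<open>\<Delta>\<close> is
  multiplicative, so \<open>\<Delta>(u^m) = \<Sum>\<^sub>q (m choose q) u^q \<otimes> u^(m-q)\<close> and \<open>\<Psi>(u^m) = 2^m u^m\<close>.
  Moreover \<open>\<Psi>\<close> preserves the closure of the span of commutators, because every word
  contributing to \<open>\<Psi>(ab)\<close> is a cyclic rotation of a word contributing, with the same
  coefficient, to \<open>\<Psi>(ba)\<close>. Below any fixed length, \<open>exp u - exp v\<close> is the finite sum of
  the \<open>\<Psi>\<close>-eigenvectors \<open>(u^m - v^m)/m!\<close> with pairwise distinct eigenvalues \<open>2^m\<close>;
  a Vandermonde elimination inside the \<open>\<Psi>\<close>-invariant space of trace-zero series then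
  shows that each summand has trace zero.
\<close>

lemma ts_mul_Nil: "ts_mul f g [] = f [] * g []"
  by (simp add: ts_mul_def)

lemma ts_mul_Cons: "ts_mul f g (a # w) = f [] * g (a # w) + ts_mul (\<lambda>v. f (a # v)) g w"
  unfolding ts_mul_def by (simp add: sum.atMost_Suc_shift del: sum.atMost_Suc)

lemma ts_mul_lincomb_left:
  "ts_mul (\<lambda>v. c * f v + f' v) g w = c * ts_mul f g w + ts_mul f' g w"
  unfolding ts_mul_def by (simp add: sum.distrib sum_distrib_left algebra_simps)

lemma ts_mul_assoc: "ts_mul (ts_mul f g) h = ts_mul f (ts_mul g h)"
proof
  fix w
  show "ts_mul (ts_mul f g) h w = ts_mul f (ts_mul g h) w"
  proof (induction w arbitrary: f)
    case Nil
    then show ?case by (simp add: ts_mul_Nil)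
  next
    case (Cons a w)
    have "ts_mul (ts_mul f g) h (a # w)
        = f [] * g [] * h (a # w) + ts_mul (\<lambda>v. f [] * g (a # v) + ts_mul (\<lambda>v. f (a # v)) g v) h w"
      by (simp add: ts_mul_Cons ts_mul_Nil)
    also have "\<dots> = f [] * g [] * h (a # w) + f [] * ts_mul (\<lambda>v. g (a # v)) h w
        + ts_mul (\<lambda>v. f (a # v)) (ts_mul g h) w"
      by (simp add: ts_mul_lincomb_left Cons.IH)
    also have "\<dots> = ts_mul f (ts_mul g h) (a # w)"
      by (simp add: ts_mul_Cons ts_mul_Nil algebra_simps)
    finally show ?case .
  qed
qed

lemma ts_mul_one_left: "ts_mul ts_one g = g"
proof
  fix w
  show "ts_mul ts_one g w = g w"
    by (cases w) (simp_all add: ts_mul_Nil ts_mul_Cons ts_one_def, simp add: ts_mul_def)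
qed

lemma ts_pow_add: "ts_mul (ts_pow f p) (ts_pow f q) = ts_pow f (p + q)"
  by (induction p) (simp_all add: ts_mul_one_left ts_mul_assoc)

lemma ts_pow_eq_0_short:
  assumes "u [] = 0" and "length w < m"
  shows "ts_pow u m w = 0"
  using assms(2)
proof (induction m arbitrary: w)
  case (Suc m)
  have "u (take i w) * ts_pow u m (drop i w) = 0" if "i \<le> length w" for i
    using Suc that assms(1) by (cases "i = 0") auto
  then show ?case unfolding ts_pow.simps ts_mul_def by (intro sum.neutral ballI) simp
qed simp

lemma ts_mul_smult_left: "ts_mul (ts_smult c f) g = ts_smult c (ts_mul f g)"
  by (simp add: ts_mul_def ts_smult_def sum_distrib_left mult.assoc fun_eq_iff)

lemma ts_mul_smult_right: "ts_mul g (ts_smult c f) = ts_smult c (ts_mul g f)"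
  by (simp add: ts_mul_def ts_smult_def sum_distrib_left algebra_simps fun_eq_iff)

lemma sum_splits:
  assumes "finite A"
  shows "(\<Sum>p\<in>A. \<Sum>i\<le>length p. F (take i p) (drop i p)) = (\<Sum>(x, y) | x @ y \<in> A. F x y)"
proof -
  have "(\<Sum>p\<in>A. \<Sum>i\<le>length p. F (take i p) (drop i p))
      = (\<Sum>(p, i)\<in>Sigma A (\<lambda>p. {..length p}). F (take i p) (drop i p))"
    using assms by (rule sum.Sigma) simp
  also have "\<dots> = (\<Sum>(x, y) | x @ y \<in> A. F x y)"
    by (rule sum.reindex_bij_witness[where i = "\<lambda>(x, y). (x @ y, length x)"
          and j = "\<lambda>(p, i). (take i p, drop i p)"]) (auto simp: min_def)
  finally show ?thesis .
qed

definition ts_word :: "'a list \<Rightarrow> ('a, 'k::field) tseries" where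
  "ts_word x = (\<lambda>v. if v = x then 1 else 0)"

lemma ts_mul_ts_word: "ts_mul (ts_word x) (ts_word y) = ts_word (x @ y)"
proof
  fix v
  have "take i v = x \<and> drop i v = y \<longleftrightarrow> i = length x \<and> v = x @ y" if "i \<le> length v" for i
    using that by (metis append_eq_conv_conj append_take_drop_id length_take min.absorb2)
  then have "ts_mul (ts_word x) (ts_word y) v
      = (\<Sum>i\<le>length v. if i = length x \<and> v = x @ y then 1 else 0)"
    unfolding ts_mul_def ts_word_def by (intro sum.cong) auto
  also have "\<dots> = ts_word (x @ y) v"
    by (simp add: ts_word_def)
  finally show "ts_mul (ts_word x) (ts_word y) v = ts_word (x @ y) v" .
qed

section \<open>The deshuffle coproduct\<close>

text \<open>A tagged word \<open>p\<close> records one way of shuffling \<open>tagged_left p\<close> (letters tagged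
  \<open>True\<close>) with \<open>tagged_right p\<close> into \<open>map fst p\<close>; unlike the set \<open>shuffles\<close>, the
  tags keep apart shuffles that produce the same word.\<close>

definition tagged_left :: "('a \<times> bool) list \<Rightarrow> 'a list" where
  "tagged_left p = map fst (filter snd p)"

definition tagged_right :: "('a \<times> bool) list \<Rightarrow> 'a list" where
  "tagged_right p = map fst (filter (\<lambda>x. \<not> snd x) p)"

lemma tagged_left_simps [simp]:
  "tagged_left [] = []" "tagged_left (p @ q) = tagged_left p @ tagged_left q"
  by (simp_all add: tagged_left_def)

lemma tagged_right_simps [simp]:
  "tagged_right [] = []" "tagged_right (p @ q) = tagged_right p @ tagged_right q"
  by (simp_all add: tagged_right_def)

lemma length_tagged: "length p = length (tagged_left p) + length (tagged_right p)"
  using sum_length_filter_compl[of snd p] by (simp add: tagged_left_def tagged_right_def)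

lemma set_tagged: "fst ` set p = set (tagged_left p) \<union> set (tagged_right p)"
  by (auto simp: tagged_left_def tagged_right_def)

definition deshuffles :: "'a list \<Rightarrow> 'a list \<Rightarrow> ('a \<times> bool) list set" where
  "deshuffles s t = {p. tagged_left p = s \<and> tagged_right p = t}"

lemma finite_deshuffles: "finite (deshuffles s t)"
proof (rule finite_subset)
  show "deshuffles s t \<subseteq> {p. set p \<subseteq> (set s \<union> set t) \<times> UNIV \<and> length p = length s + length t}"
  proof
    fix p assume "p \<in> deshuffles s t"
    then have "fst ` set p = set s \<union> set t" "length p = length s + length t"
      using set_tagged[of p] length_tagged[of p] by (auto simp: deshuffles_def)
    then show "p \<in> {p. set p \<subseteq> (set s \<union> set t) \<times> UNIV \<and> length p = length s + length t}"
      by force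
  qed
  show "finite {p. set p \<subseteq> (set s \<union> set t) \<times> (UNIV :: bool set) \<and> length p = length s + length t}"
    by (rule finite_lists_length_eq) simp
qed

lemma deshuffles_Nil_right: "deshuffles s [] = {map (\<lambda>a. (a, True)) s}"
proof -
  have "p \<in> deshuffles s [] \<longleftrightarrow> p = map (\<lambda>a. (a, True)) s" for p
    by (induction p arbitrary: s)
       (auto simp: deshuffles_def tagged_left_def tagged_right_def, metis list.map_comp)
  then show ?thesis by blast
qed

lemma deshuffles_Nil_left: "deshuffles [] t = {map (\<lambda>a. (a, False)) t}"
proof -
  have "p \<in> deshuffles [] t \<longleftrightarrow> p = map (\<lambda>a. (a, False)) t" for p
    by (induction p arbitrary: t)
       (auto simp: deshuffles_def tagged_left_def tagged_right_def, metis list.map_comp)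
  then show ?thesis by blast
qed

text \<open>\<open>coprod x s t\<close> is the coefficient of \<open>s \<otimes> t\<close> in \<open>\<Delta> x\<close>.\<close>

definition coprod :: "('a, 'k::field) tseries \<Rightarrow> 'a list \<Rightarrow> 'a list \<Rightarrow> 'k" where
  "coprod x s t = (\<Sum>p\<in>deshuffles s t. x (map fst p))"

lemma coprod_Nil_right [simp]: "coprod x s [] = x s"
  by (simp add: coprod_def deshuffles_Nil_right comp_def)

lemma coprod_Nil_left [simp]: "coprod x [] t = x t"
  by (simp add: coprod_def deshuffles_Nil_left comp_def)

lemma coprod_cong:
  assumes "\<And>w. length w = length s + length t \<Longrightarrow> x w = y w"
  shows "coprod x s t = coprod y s t"
  unfolding coprod_def
proof (rule sum.cong[OF refl])
  fix p assume "p \<in> deshuffles s t"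
  then show "x (map fst p) = y (map fst p)"
    using length_tagged[of p] by (intro assms) (simp add: deshuffles_def)
qed

lemma coprod_add: "coprod (ts_add f g) s t = coprod f s t + coprod g s t"
  by (simp add: coprod_def ts_add_def sum.distrib)

lemma coprod_smult: "coprod (ts_smult c f) s t = c * coprod f s t"
  by (simp add: coprod_def ts_smult_def sum_distrib_left)

lemma coprod_diff: "coprod (ts_diff f g) s t = coprod f s t - coprod g s t"
  by (simp add: coprod_def ts_diff_def sum_subtractf)

lemma coprod_ts_one: "coprod ts_one s t = ts_one s * ts_one t"
proof (cases "s = []")
  case False
  have "coprod ts_one s t = 0"
    unfolding coprod_def using False
    by (intro sum.neutral) (auto simp: deshuffles_def ts_one_def tagged_left_def)
  then show ?thesis using False by (simp add: ts_one_def)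
qed (simp add: ts_one_def)

lemma coprod_ts_mul:
  "coprod (ts_mul f g) s t =
    (\<Sum>(i, j)\<in>{..length s} \<times> {..length t}.
        coprod f (take i s) (take j t) * coprod g (drop i s) (drop j t))"
proof -
  define B where
    "B = (\<lambda>(i, j). deshuffles (take i s) (take j t) \<times> deshuffles (drop i s) (drop j t))"
  have "coprod (ts_mul f g) s t = (\<Sum>(x, y) | x @ y \<in> deshuffles s t. f (map fst x) * g (map fst y))"
    using sum_splits[OF finite_deshuffles, of "\<lambda>x y. f (map fst x) * g (map fst y)"]
    by (simp add: coprod_def ts_mul_def take_map drop_map)
  also have "\<dots> = (\<Sum>(ij, x, y)\<in>Sigma ({..length s} \<times> {..length t}) B. f (map fst x) * g (map fst y))"
    by (rule sum.reindex_bij_witness[where i = snd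
          and j = "\<lambda>(x, y). ((length (tagged_left x), length (tagged_right x)), x, y)"])
       (auto simp: B_def deshuffles_def min_def)
  also have "\<dots> = (\<Sum>(i, j)\<in>{..length s} \<times> {..length t}.
        coprod f (take i s) (take j t) * coprod g (drop i s) (drop j t))"
    by (subst sum.Sigma[symmetric])
       (auto simp: B_def finite_deshuffles coprod_def sum_product sum.cartesian_product
         intro!: sum.cong)
  finally show ?thesis .
qed

definition primitive :: "('a, 'k::field) tseries \<Rightarrow> bool" where
  "primitive u \<longleftrightarrow> u [] = 0 \<and> (\<forall>s t. s \<noteq> [] \<longrightarrow> t \<noteq> [] \<longrightarrow> coprod u s t = 0)"

lemma coprod_primitive:
  assumes "primitive u"
  shows "coprod u s t = (if t = [] then u s else 0) + (if s = [] then u t else 0)"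
  using assms by (cases "s = []"; cases "t = []") (auto simp: primitive_def)

lemma sum_if_take_eq_Nil: "(\<Sum>i\<le>length s. if take i s = [] then G i else 0) = G 0"
proof -
  have "(\<Sum>i\<le>length s. if take i s = [] then G i else 0) = (\<Sum>i\<le>length s. if i = 0 then G i else 0)"
    by (rule sum.cong) auto
  then show ?thesis by simp
qed

lemma coprod_ts_mul_primitive_left:
  assumes "primitive f"
  shows "coprod (ts_mul f g) s t
    = (\<Sum>i\<le>length s. f (take i s) * coprod g (drop i s) t)
    + (\<Sum>j\<le>length t. f (take j t) * coprod g s (drop j t))"
proof -
  have "coprod (ts_mul f g) s t
      = (\<Sum>i\<le>length s. \<Sum>j\<le>length t.
           if take j t = [] then f (take i s) * coprod g (drop i s) (drop j t) else 0)
      + (\<Sum>j\<le>length t. \<Sum>i\<le>length s.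
           if take i s = [] then f (take j t) * coprod g (drop i s) (drop j t) else 0)"
    by (simp add: coprod_ts_mul coprod_primitive[OF assms] distrib_right sum.distrib
        if_distrib[where f = "\<lambda>x. x * c" for c] sum.cartesian_product[symmetric]
        sum.swap[of _ "{..length t}"] cong: if_cong)
  then show ?thesis
    by (simp only: sum_if_take_eq_Nil drop_0)
qed

lemma coprod_ts_mul_primitive:
  assumes "primitive f" and "primitive g" and "s \<noteq> []" and "t \<noteq> []"
  shows "coprod (ts_mul f g) s t = f s * g t + f t * g s"
  using assms
  by (simp add: coprod_ts_mul_primitive_left coprod_primitive
      if_distrib[where f = "\<lambda>x. c * x" for c] cong: if_cong)

lemma lie_poly_primitive:
  fixes f :: "('a, 'k::field) tseries"
  shows "f \<in> lie_poly \<Longrightarrow> primitive f"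
proof (induction rule: lie_poly.induct)
  case (gen a)
  have "coprod (\<lambda>w. if w = [a] then 1 else 0) s t = (0::'k)" if "s \<noteq> []" "t \<noteq> []" for s t
    unfolding coprod_def
  proof (intro sum.neutral ballI)
    fix p assume "p \<in> deshuffles s t"
    then have "length p = length s + length t"
      using length_tagged[of p] by (simp add: deshuffles_def)
    then show "(if map fst p = [a] then 1 else 0) = 0"
      using that by (cases s; cases t) auto
  qed
  then show ?case by (simp add: primitive_def)
next
  case (add f g)
  then show ?case by (simp add: primitive_def coprod_add) (simp add: ts_add_def)
next
  case (smult f c)
  then show ?case by (simp add: primitive_def coprod_smult) (simp add: ts_smult_def)
next
  case (bracket f g)
  then show ?case
    by (simp add: primitive_def coprod_diff coprod_ts_mul_primitive)
       (simp add: ts_diff_def ts_mul_Nil)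
qed

lemma lie_series_primitive:
  assumes "lie_series u"
  shows "primitive u"
  unfolding primitive_def
proof (intro conjI allI impI)
  have component: "hom_comp d u \<in> lie_poly" for d
    using assms by (simp add: lie_series_def)
  show "u [] = 0"
    using lie_poly_primitive[OF component[of 0]] by (simp add: primitive_def hom_comp_def)
  fix s t :: "'a list"
  assume "s \<noteq> []" "t \<noteq> []"
  have "coprod u s t = coprod (hom_comp (length s + length t) u) s t"
    by (rule coprod_cong) (simp add: hom_comp_def)
  also have "\<dots> = 0"
    using lie_poly_primitive[OF component] \<open>s \<noteq> []\<close> \<open>t \<noteq> []\<close> by (simp add: primitive_def)
  finally show "coprod u s t = 0" .
qed

lemma binomial_convolution_Suc:
  fixes A B :: "nat \<Rightarrow> 'k::comm_ring_1"
  shows "(\<Sum>q\<le>m. of_nat (m choose q) * A (Suc q) * B (m - q))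
       + (\<Sum>q\<le>m. of_nat (m choose q) * A q * B (Suc (m - q)))
     = (\<Sum>q\<le>Suc m. of_nat (Suc m choose q) * A q * B (Suc m - q))"
proof -
  have shift: "(\<Sum>q\<le>m. of_nat (m choose q) * A q * B (Suc (m - q)))
     = A 0 * B (Suc m) + (\<Sum>q\<le>m. of_nat (m choose Suc q) * A (Suc q) * B (m - q))"
  proof (cases m)
    case (Suc n)
    have "(\<Sum>q\<le>m. of_nat (m choose q) * A q * B (Suc (m - q)))
        = A 0 * B (Suc m) + (\<Sum>q\<le>n. of_nat (m choose Suc q) * A (Suc q) * B (m - q))"
      unfolding Suc by (simp add: sum.atMost_Suc_shift Suc_diff_le del: sum.atMost_Suc)
    also have "\<dots> = A 0 * B (Suc m) + (\<Sum>q\<le>m. of_nat (m choose Suc q) * A (Suc q) * B (m - q))"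
      unfolding Suc by (simp add: binomial_eq_0)
    finally show ?thesis .
  qed simp
  have "(\<Sum>q\<le>Suc m. of_nat (Suc m choose q) * A q * B (Suc m - q))
      = A 0 * B (Suc m) + (\<Sum>q\<le>m. of_nat (Suc m choose Suc q) * A (Suc q) * B (m - q))"
    by (simp add: sum.atMost_Suc_shift del: sum.atMost_Suc)
  also have "\<dots> = A 0 * B (Suc m) + (\<Sum>q\<le>m. of_nat (m choose q) * A (Suc q) * B (m - q))
        + (\<Sum>q\<le>m. of_nat (m choose Suc q) * A (Suc q) * B (m - q))"
    by (simp add: sum.distrib algebra_simps)
  finally show ?thesis
    using shift by (simp add: algebra_simps)
qed

lemma coprod_ts_pow:
  assumes "primitive u"
  shows "coprod (ts_pow u m) s t = (\<Sum>q\<le>m. of_nat (m choose q) * ts_pow u q s * ts_pow u (m - q) t)"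
proof (induction m arbitrary: s t)
  case 0
  show ?case by (simp add: coprod_ts_one)
next
  case (Suc m)
  have "(\<Sum>i\<le>length s. u (take i s) * coprod (ts_pow u m) (drop i s) t)
      = (\<Sum>q\<le>m. of_nat (m choose q) * ts_pow u (Suc q) s * ts_pow u (m - q) t)"
    by (simp add: Suc.IH sum_distrib_left sum_distrib_right sum.swap[of _ "{..length s}"]
        ts_mul_def algebra_simps)
  moreover have "(\<Sum>j\<le>length t. u (take j t) * coprod (ts_pow u m) s (drop j t))
      = (\<Sum>q\<le>m. of_nat (m choose q) * ts_pow u q s * ts_pow u (Suc (m - q)) t)"
    by (simp add: Suc.IH sum_distrib_left sum_distrib_right sum.swap[of _ "{..length t}"]
        ts_mul_def algebra_simps)
  ultimately show ?case
    using binomial_convolution_Suc[of m "\<lambda>q. ts_pow u q s" "\<lambda>q. ts_pow u q t"]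
    by (simp add: coprod_ts_mul_primitive_left[OF assms])
qed

section \<open>The operator \<open>\<mu> \<circ> \<Delta>\<close>\<close>

definition coprod_mult :: "('a, 'k::field) tseries \<Rightarrow> ('a, 'k) tseries" where
  "coprod_mult x w = (\<Sum>i\<le>length w. coprod x (take i w) (drop i w))"

lemma coprod_mult_ts_pow:
  assumes "primitive u"
  shows "coprod_mult (ts_pow u m) w = 2 ^ m * ts_pow u m w"
proof -
  have "coprod_mult (ts_pow u m) w = (\<Sum>i\<le>length w. \<Sum>q\<le>m.
      of_nat (m choose q) * (ts_pow u q (take i w) * ts_pow u (m - q) (drop i w)))"
    by (simp add: coprod_mult_def coprod_ts_pow[OF assms] mult.assoc)
  also have "\<dots> = (\<Sum>q\<le>m. of_nat (m choose q) * ts_mul (ts_pow u q) (ts_pow u (m - q)) w)"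
    by (simp add: sum.swap[of _ "{..length w}"] ts_mul_def sum_distrib_left)
  also have "\<dots> = of_nat (\<Sum>q\<le>m. m choose q) * ts_pow u m w"
    by (simp add: ts_pow_add sum_distrib_right)
  also have "\<dots> = 2 ^ m * ts_pow u m w"
    by (simp add: choose_row_sum)
  finally show ?thesis .
qed

lemma coprod_mult_cong:
  assumes "\<And>v. length v = length w \<Longrightarrow> x v = y v"
  shows "coprod_mult x w = coprod_mult y w"
  unfolding coprod_mult_def by (intro sum.cong refl coprod_cong) (simp add: assms)

lemma coprod_mult_zero: "coprod_mult (\<lambda>w. 0) = (\<lambda>w. 0)"
  by (simp add: coprod_mult_def coprod_def fun_eq_iff)

lemma coprod_mult_add: "coprod_mult (ts_add x y) = ts_add (coprod_mult x) (coprod_mult y)"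
  by (simp add: coprod_mult_def ts_add_def[of "coprod_mult x"] coprod_add sum.distrib fun_eq_iff)

lemma coprod_mult_diff: "coprod_mult (ts_diff x y) = ts_diff (coprod_mult x) (coprod_mult y)"
  by (simp add: coprod_mult_def ts_diff_def[of "coprod_mult x"] coprod_diff sum_subtractf
      fun_eq_iff)

lemma coprod_mult_smult: "coprod_mult (ts_smult c x) = ts_smult c (coprod_mult x)"
  by (simp add: coprod_mult_def ts_smult_def[of c "coprod_mult x"] coprod_smult sum_distrib_left
      fun_eq_iff)

lemma coprod_mult_sum:
  "coprod_mult (\<lambda>w. \<Sum>i\<in>S. F i w) w = (\<Sum>i\<in>S. coprod_mult (F i) w)"
  by (simp add: coprod_mult_def coprod_def sum.swap[of _ S])

definition tagged_splits :: "'a list \<Rightarrow> ('a \<times> bool) list set" where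
  "tagged_splits w = {p. tagged_left p @ tagged_right p = w}"

lemma finite_tagged_splits: "finite (tagged_splits w)"
proof (rule finite_subset)
  show "tagged_splits w \<subseteq> {p. set p \<subseteq> set w \<times> UNIV \<and> length p = length w}"
  proof
    fix p assume "p \<in> tagged_splits w"
    then have "fst ` set p = set w" "length p = length w"
      using set_tagged[of p] length_tagged[of p] by (auto simp: tagged_splits_def)
    then show "p \<in> {p. set p \<subseteq> set w \<times> UNIV \<and> length p = length w}"
      by force
  qed
  show "finite {p. set p \<subseteq> set w \<times> (UNIV :: bool set) \<and> length p = length w}"
    by (rule finite_lists_length_eq) simp
qed

lemma coprod_mult_eq_sum_tagged_splits:
  "coprod_mult x w = (\<Sum>p\<in>tagged_splits w. x (map fst p))"
proof -
  have "coprod_mult x w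
      = (\<Sum>(i, p)\<in>Sigma {..length w} (\<lambda>i. deshuffles (take i w) (drop i w)). x (map fst p))"
    unfolding coprod_mult_def coprod_def by (rule sum.Sigma) (auto simp: finite_deshuffles)
  also have "\<dots> = (\<Sum>p\<in>tagged_splits w. x (map fst p))"
    by (rule sum.reindex_bij_witness[where i = "\<lambda>p. (length (tagged_left p), p)" and j = snd])
       (auto simp: deshuffles_def tagged_splits_def min_def)
  finally show ?thesis .
qed

lemma coprod_mult_ts_mul:
  "coprod_mult (ts_mul a b) w =
    (\<Sum>(x, y) | tagged_left x @ tagged_left y @ tagged_right x @ tagged_right y = w.
        a (map fst x) * b (map fst y))"
  using sum_splits[OF finite_tagged_splits, of "\<lambda>x y. a (map fst x) * b (map fst y)" w]
  by (simp add: coprod_mult_eq_sum_tagged_splits ts_mul_def take_map drop_map tagged_splits_def)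

definition tag_flip :: "('a \<times> bool) list \<Rightarrow> ('a \<times> bool) list" where
  "tag_flip p = map (\<lambda>(a, b). (a, \<not> b)) p"

lemma tag_flip_simps [simp]:
  "tagged_left (tag_flip p) = tagged_right p" "tagged_right (tag_flip p) = tagged_left p"
  "map fst (tag_flip p) = map fst p" "tag_flip (tag_flip p) = p"
  by (induction p) (auto simp: tag_flip_def tagged_left_def tagged_right_def)

lemma coprod_mult_ts_mul_swap:
  "coprod_mult (ts_mul b a) w =
    (\<Sum>(x, y) | tagged_right y @ tagged_left x @ tagged_left y @ tagged_right x = w.
        a (map fst x) * b (map fst y))"
  unfolding coprod_mult_ts_mul
  by (rule sum.reindex_bij_witness[where i = "\<lambda>(x, y). (tag_flip y, x)"
        and j = "\<lambda>(x, y). (y, tag_flip x)"]) auto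

section \<open>Series of trace zero\<close>

lemma comm_span_add: "x \<in> comm_span \<Longrightarrow> y \<in> comm_span \<Longrightarrow> ts_add x y \<in> comm_span"
proof (induction rule: comm_span.induct)
  case zero
  then show ?case by (simp add: ts_add_def)
next
  case (step x a b)
  have "ts_add (ts_add (ts_diff (ts_mul a b) (ts_mul b a)) x) y
      = ts_add (ts_diff (ts_mul a b) (ts_mul b a)) (ts_add x y)"
    by (simp add: ts_add_def add.assoc)
  then show ?case using step comm_span.step by metis
qed

lemma comm_span_smult: "x \<in> comm_span \<Longrightarrow> ts_smult c x \<in> comm_span"
proof (induction rule: comm_span.induct)
  case zero
  then show ?case by (simp add: ts_smult_def comm_span.zero)
next
  case (step x a b)
  have "ts_smult c (ts_add (ts_diff (ts_mul a b) (ts_mul b a)) x)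
      = ts_add (ts_diff (ts_mul (ts_smult c a) b) (ts_mul b (ts_smult c a))) (ts_smult c x)"
    by (simp add: ts_mul_smult_left ts_mul_smult_right)
       (simp add: ts_add_def ts_diff_def ts_smult_def algebra_simps)
  then show ?case using step comm_span.step by metis
qed

lemma comm_span_commutator: "ts_diff (ts_mul a b) (ts_mul b a) \<in> comm_span"
  using comm_span.step[OF comm_span.zero, of a b] by (simp add: ts_add_def)

lemma comm_span_sum:
  "finite S \<Longrightarrow> (\<And>i. i \<in> S \<Longrightarrow> F i \<in> comm_span) \<Longrightarrow> (\<lambda>w. \<Sum>i\<in>S. F i w) \<in> comm_span"
proof (induction S rule: finite_induct)
  case empty
  then show ?case by (simp add: comm_span.zero)
next
  case (insert i S)
  then have "ts_add (F i) (\<lambda>w. \<Sum>i\<in>S. F i w) \<in> comm_span"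
    by (intro comm_span_add) auto
  then show ?case
    using insert.hyps by (simp add: ts_add_def)
qed

lemma comm_span_rotations:
  assumes "finite T"
  shows "(\<lambda>w. (\<Sum>t\<in>T. if w = X t @ Y t then c t else 0) - (\<Sum>t\<in>T. if w = Y t @ X t then c t else 0))
    \<in> comm_span"
proof -
  have "(\<lambda>w. (\<Sum>t\<in>T. if w = X t @ Y t then c t else 0) - (\<Sum>t\<in>T. if w = Y t @ X t then c t else 0))
      = (\<lambda>w. \<Sum>t\<in>T. ts_diff (ts_mul (ts_smult (c t) (ts_word (X t))) (ts_word (Y t)))
                            (ts_mul (ts_word (Y t)) (ts_smult (c t) (ts_word (X t)))) w)"
    by (simp only: ts_mul_smult_left ts_mul_smult_right ts_mul_ts_word)
       (simp add: ts_diff_def ts_smult_def ts_word_def sum_subtractf fun_eq_iff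
         if_distrib[where f = "\<lambda>x. c * x" for c] cong: if_cong)
  also have "\<dots> \<in> comm_span"
    using assms by (intro comm_span_sum comm_span_commutator)
  finally show ?thesis .
qed

definition traceless_below :: "nat \<Rightarrow> ('a, 'k::field) tseries \<Rightarrow> bool" where
  "traceless_below N x \<longleftrightarrow> (\<exists>g\<in>comm_span. \<forall>w. length w < N \<longrightarrow> x w = g w)"

lemma trace_eq_iff_traceless_below: "trace_eq x y \<longleftrightarrow> (\<forall>N. traceless_below N (ts_diff x y))"
  by (simp add: trace_eq_def traceless_below_def)

lemma traceless_below_cong:
  "traceless_below N x \<Longrightarrow> (\<And>w. length w < N \<Longrightarrow> x w = y w) \<Longrightarrow> traceless_below N y"
  unfolding traceless_below_def by metis

lemma traceless_below_mono: "traceless_below N x \<Longrightarrow> M \<le> N \<Longrightarrow> traceless_below M x"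
  unfolding traceless_below_def by auto

lemma traceless_below_add:
  "traceless_below N x \<Longrightarrow> traceless_below N y \<Longrightarrow> traceless_below N (ts_add x y)"
  unfolding traceless_below_def using comm_span_add by (fastforce simp: ts_add_def)

lemma traceless_below_smult: "traceless_below N x \<Longrightarrow> traceless_below N (ts_smult c x)"
  unfolding traceless_below_def using comm_span_smult by (fastforce simp: ts_smult_def)

lemma traceless_below_diff:
  assumes "traceless_below N x" and "traceless_below N y"
  shows "traceless_below N (ts_diff x y)"
proof -
  have "ts_diff x y = ts_add x (ts_smult (-1) y)"
    by (simp add: ts_diff_def ts_add_def ts_smult_def fun_eq_iff)
  then show ?thesis
    using assms by (simp add: traceless_below_add traceless_below_smult)
qed

lemma traceless_below_sum:
  "finite S \<Longrightarrow> (\<And>i. i \<in> S \<Longrightarrow> traceless_below N (F i)) \<Longrightarrow> traceless_below N (\<lambda>w. \<Sum>i\<in>S. F i w)"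
proof (induction S rule: finite_induct)
  case empty
  then show ?case by (auto simp: traceless_below_def intro: comm_span.zero)
next
  case (insert i S)
  then have "traceless_below N (ts_add (F i) (\<lambda>w. \<Sum>i\<in>S. F i w))"
    by (intro traceless_below_add) auto
  then show ?case
    using insert.hyps by (simp add: ts_add_def)
qed

lemma finite_lists_length_less: "finite {xs :: 'a::finite list. length xs < N}"
  by (rule finite_subset[OF _ finite_lists_length_le[of UNIV N]]) auto

lemma traceless_below_coprod_mult_commutator:
  fixes a b :: "('a::finite, 'k::field) tseries"
  shows "traceless_below N (ts_diff (coprod_mult (ts_mul a b)) (coprod_mult (ts_mul b a)))"
proof -
  define T :: "(('a \<times> bool) list \<times> ('a \<times> bool) list) set"
    where "T = {x. length x < N} \<times> {y. length y < N}"
  define X :: "('a \<times> bool) list \<times> ('a \<times> bool) list \<Rightarrow> 'a list"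
    where "X = (\<lambda>(x, y). tagged_left x @ tagged_left y @ tagged_right x)"
  define Y :: "('a \<times> bool) list \<times> ('a \<times> bool) list \<Rightarrow> 'a list"
    where "Y = (\<lambda>(x, y). tagged_right y)"
  define c :: "('a \<times> bool) list \<times> ('a \<times> bool) list \<Rightarrow> 'k"
    where "c = (\<lambda>(x, y). a (map fst x) * b (map fst y))"
  \<comment> \<open>\<open>t\<close> contributes \<open>c t\<close> to \<open>\<Psi>(ab)\<close> at \<open>X t @ Y t\<close> and to \<open>\<Psi>(ba)\<close> at \<open>Y t @ X t\<close>\<close>
  have "finite T"
    unfolding T_def by (intro finite_cartesian_product finite_lists_length_less)
  have "ts_diff (coprod_mult (ts_mul a b)) (coprod_mult (ts_mul b a)) w
      = (\<Sum>t\<in>T. if w = X t @ Y t then c t else 0) - (\<Sum>t\<in>T. if w = Y t @ X t then c t else 0)"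
    if "length w < N" for w
  proof -
    have in_T: "(x, y) \<in> T" if "w = X (x, y) @ Y (x, y) \<or> w = Y (x, y) @ X (x, y)" for x y
      using that \<open>length w < N\<close> length_tagged[of x] length_tagged[of y]
      by (auto simp: T_def X_def Y_def)
    have "coprod_mult (ts_mul a b) w = (\<Sum>t\<in>T. if w = X t @ Y t then c t else 0)"
      unfolding coprod_mult_ts_mul sum.inter_filter[OF \<open>finite T\<close>, symmetric]
      by (rule sum.cong) (auto simp: X_def Y_def c_def intro: in_T)
    moreover have "coprod_mult (ts_mul b a) w = (\<Sum>t\<in>T. if w = Y t @ X t then c t else 0)"
      unfolding coprod_mult_ts_mul_swap sum.inter_filter[OF \<open>finite T\<close>, symmetric]
      by (rule sum.cong) (auto simp: X_def Y_def c_def intro: in_T)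
    ultimately show ?thesis
      by (simp add: ts_diff_def)
  qed
  then show ?thesis
    unfolding traceless_below_def using comm_span_rotations[OF \<open>finite T\<close>, of X Y c] by auto
qed

lemma traceless_below_coprod_mult:
  fixes x :: "('a::finite, 'k::field) tseries"
  assumes "traceless_below N x"
  shows "traceless_below N (coprod_mult x)"
proof -
  obtain g where "g \<in> comm_span" and g: "\<And>w. length w < N \<Longrightarrow> x w = g w"
    using assms unfolding traceless_below_def by blast
  from \<open>g \<in> comm_span\<close> have "traceless_below N (coprod_mult g)"
  proof (induction rule: comm_span.induct)
    case zero
    then show ?case by (auto simp: coprod_mult_zero traceless_below_def intro: comm_span.zero)
  next
    case (step x a b)
    then show ?case
      by (simp add: coprod_mult_add coprod_mult_diff traceless_below_add
          traceless_below_coprod_mult_commutator)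
  qed
  then show ?thesis
    by (rule traceless_below_cong) (intro coprod_mult_cong, simp add: g)
qed

section \<open>Separating eigencomponents\<close>

lemma traceless_below_eigencomponents:
  fixes D :: "'i \<Rightarrow> ('a::finite, 'k::field) tseries"
  assumes "finite S" and "inj_on lam S"
    and "\<And>i w. i \<in> S \<Longrightarrow> coprod_mult (D i) w = lam i * D i w"
    and "traceless_below N (\<lambda>w. \<Sum>i\<in>S. D i w)"
  shows "\<forall>i\<in>S. traceless_below N (D i)"
  using assms
proof (induction S arbitrary: D rule: finite_induct)
  case empty
  then show ?case by simp
next
  case (insert k S)
  let ?X = "\<lambda>w. \<Sum>i\<in>insert k S. D i w"
  define D' where "D' i = ts_smult (lam i - lam k) (D i)" for i
  have "coprod_mult ?X w = (\<Sum>i\<in>insert k S. lam i * D i w)" for w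
    unfolding coprod_mult_sum by (rule sum.cong) (simp_all add: insert.prems(2))
  then have "ts_diff (coprod_mult ?X) (ts_smult (lam k) ?X) w = (\<Sum>i\<in>S. D' i w)" for w
    using insert.hyps
    by (simp add: ts_diff_def ts_smult_def D'_def sum_distrib_left sum_subtractf algebra_simps)
  moreover have "traceless_below N (ts_diff (coprod_mult ?X) (ts_smult (lam k) ?X))"
    using insert.prems(3)
    by (intro traceless_below_diff traceless_below_coprod_mult traceless_below_smult)
  ultimately have "traceless_below N (\<lambda>w. \<Sum>i\<in>S. D' i w)"
    by (simp add: traceless_below_cong)
  moreover have "coprod_mult (D' i) w = lam i * D' i w" if "i \<in> S" for i w
    using insert.prems(2) that by (simp only: D'_def coprod_mult_smult) (simp add: ts_smult_def)
  ultimately have D': "\<forall>i\<in>S. traceless_below N (D' i)"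
    using insert.IH insert.prems(1) by (simp add: inj_on_insert)
  have DS: "\<forall>i\<in>S. traceless_below N (D i)"
  proof
    fix i assume "i \<in> S"
    then have "lam i \<noteq> lam k"
      using insert.hyps(2) insert.prems(1) by (auto simp: inj_on_def)
    then have "D i = ts_smult (inverse (lam i - lam k)) (D' i)"
      by (simp add: D'_def ts_smult_def fun_eq_iff)
    then show "traceless_below N (D i)"
      using D' \<open>i \<in> S\<close> traceless_below_smult by metis
  qed
  have "traceless_below N (ts_diff ?X (\<lambda>w. \<Sum>i\<in>S. D i w))"
    using DS
    by (intro traceless_below_diff[OF insert.prems(3)] traceless_below_sum[OF insert.hyps(1)]) auto
  then have "traceless_below N (D k)"
    by (rule traceless_below_cong) (simp add: ts_diff_def insert.hyps)
  with DS show ?case by simp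
qed

lemma inj_power_two: "inj (\<lambda>j. (2::'k::field_char_0) ^ j)"
proof (rule injI)
  fix i j assume "(2::'k) ^ i = 2 ^ j"
  then have "of_nat (2 ^ i) = (of_nat (2 ^ j) :: 'k)" by simp
  then show "i = j" by (simp only: of_nat_eq_iff power_inject_exp)
qed

lemma ts_exp_eq_sum_lessThan:
  assumes "u [] = 0" and "length w < N"
  shows "ts_exp u w = (\<Sum>j<N. ts_pow u j w / fact j)"
proof -
  have "ts_pow u j w / fact j = 0" if "j \<in> {..<N} - {..length w}" for j
    using that ts_pow_eq_0_short[of u, OF assms(1)] by simp
  then show ?thesis
    unfolding ts_exp_def using assms(2) by (intro sum.mono_neutral_left) auto
qed

theorem theorem3p2:
  fixes u v :: "'a::finite list \<Rightarrow> 'k::field_char_0"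
  assumes "lie_series u" and "lie_series v"
    and "trace_eq (ts_exp u) (ts_exp v)"
  shows "\<forall>m::nat. trace_eq (ts_pow u m) (ts_pow v m)"
proof
  fix m :: nat
  have u: "primitive u" and v: "primitive v"
    using assms(1,2) by (auto intro: lie_series_primitive)
  define D where "D j = ts_smult (1 / fact j) (ts_diff (ts_pow u j) (ts_pow v j))" for j
  have eigen: "coprod_mult (D j) w = 2 ^ j * D j w" for j w
    by (simp only: D_def coprod_mult_smult coprod_mult_diff)
       (simp add: ts_smult_def ts_diff_def coprod_mult_ts_pow[OF u] coprod_mult_ts_pow[OF v]
         algebra_simps)
  show "trace_eq (ts_pow u m) (ts_pow v m)"
    unfolding trace_eq_iff_traceless_below
  proof
    fix N
    define M where "M = max N (Suc m)"
    have "traceless_below M (ts_diff (ts_exp u) (ts_exp v))"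
      using assms(3) by (simp add: trace_eq_iff_traceless_below)
    then have "traceless_below M (\<lambda>w. \<Sum>j<M. D j w)"
      by (rule traceless_below_cong)
         (use u v in \<open>simp add: ts_diff_def D_def ts_smult_def primitive_def
            ts_exp_eq_sum_lessThan sum_subtractf diff_divide_distrib\<close>)
    then have "\<forall>j\<in>{..<M}. traceless_below M (D j)"
      using eigen inj_on_subset[OF inj_power_two subset_UNIV]
      by (intro traceless_below_eigencomponents[where lam = "\<lambda>j. 2 ^ j"]) auto
    then have "traceless_below M (D m)"
      by (simp add: M_def)
    then have "traceless_below M (ts_smult (fact m) (D m))"
      by (rule traceless_below_smult)
    moreover have "ts_smult (fact m) (D m) = ts_diff (ts_pow u m) (ts_pow v m)"
      by (simp add: D_def ts_smult_def fun_eq_iff)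
    ultimately show "traceless_below N (ts_diff (ts_pow u m) (ts_pow v m))"
      by (auto simp: M_def intro: traceless_below_mono)
  qed
qed

end
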